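(* Let $\alpha,\beta$ be rationals in $(0,1)$, let $\mathsf{S}_1,\mathsf{S}_2,\ldots$ be positive rationals, and define $\mathsf{srtt}_1=\mathsf{S}_1$, $\mathsf{srtt}_j=(1-\alpha)\mathsf{srtt}_{j-1}+\alpha\mathsf{S}_j$ for $j>1$, and $\mathsf{rttvar}_1=\mathsf{S}_1/2$, $\mathsf{rttvar}_j=(1-\beta)\mathsf{rttvar}_{j-1}+\beta|\mathsf{srtt}_{j-1}-\mathsf{S}_j|$ for $j>1$. Let $c,r>0$ be rationals and $i\ge 2$, and suppose $\mathsf{S}_j\in[c-r,c+r]$ for all $j\ge i$. Then there is a sequence $(U_n)_{n\ge 0}$ with $\mathsf{rttvar}_{i+n}\le U_n$ for all $n$ and $\lim_{n\to\infty}U_n=2r$. *)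

theory Defs
  imports Complex_Main
begin

text \<open>Sequences are indexed from 1; the value at index 0 is a junk value.\<close>

fun srtt :: "rat \<Rightarrow> (nat \<Rightarrow> rat) \<Rightarrow> nat \<Rightarrow> rat" where
  "srtt a S 0 = S 1"
| "srtt a S (Suc 0) = S 1"
| "srtt a S (Suc (Suc k)) = (1 - a) * srtt a S (Suc k) + a * S (Suc (Suc k))"

fun rttvar :: "rat \<Rightarrow> rat \<Rightarrow> (nat \<Rightarrow> rat) \<Rightarrow> nat \<Rightarrow> rat" where
  "rttvar a b S 0 = S 1 / 2"
| "rttvar a b S (Suc 0) = S 1 / 2"
| "rttvar a b S (Suc (Suc k)) =
     (1 - b) * rttvar a b S (Suc k) + b * \<bar>srtt a S (Suc k) - S (Suc (Suc k))\<bar>"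

end

theory Submission
  imports Defs
begin

text \<open>Once the samples stay in \<open>[c - r, c + r]\<close>,
  the distance of \<open>srtt\<close> from \<open>c\<close> exceeds \<open>r\<close> by at most a term decaying like \<open>(1 - \<alpha>)\<^sup>n\<close>,
  so the samples fed into \<open>rttvar\<close> are at most \<open>2 r\<close> plus that term. Smoothing such an input
  with factor \<open>1 - \<beta>\<close> gives \<open>rttvar\<close> at most \<open>2 r + (A + n D) q\<^sup>n\<close> with
  \<open>q = max (1 - \<alpha>) (1 - \<beta>)\<close>, and this bound tends to \<open>2 r\<close>.\<close>

lemma smoothing_deviation_bound:
  fixes x y :: "nat \<Rightarrow> 'a::linordered_field"
  assumes "0 \<le> a" "a \<le> 1"
    and step: "\<And>n. x (Suc n) = (1 - a) * x n + a * y n"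
    and input: "\<And>n. \<bar>y n - c\<bar> \<le> r"
  shows "\<bar>x n - c\<bar> \<le> r + (1 - a) ^ n * \<bar>x 0 - c\<bar>"
proof (induction n)
  case 0
  have "0 \<le> r" using input[of 0] by linarith
  then show ?case by simp
next
  case (Suc n)
  have "\<bar>x (Suc n) - c\<bar> = \<bar>(1 - a) * (x n - c) + a * (y n - c)\<bar>"
    by (simp add: step algebra_simps)
  also have "\<dots> \<le> (1 - a) * \<bar>x n - c\<bar> + a * \<bar>y n - c\<bar>"
    using assms(1,2) by (simp add: abs_mult abs_triangle_ineq[THEN order_trans])
  also have "\<dots> \<le> (1 - a) * (r + (1 - a) ^ n * \<bar>x 0 - c\<bar>) + a * r"
    using Suc assms(1,2) input[of n] by (intro add_mono mult_left_mono) auto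
  also have "\<dots> = r + (1 - a) ^ Suc n * \<bar>x 0 - c\<bar>"
    by (simp add: algebra_simps)
  finally show ?case .
qed

lemma smoothing_geometric_input_bound:
  fixes v :: "nat \<Rightarrow> 'a::linordered_field"
  assumes "0 \<le> b" "b \<le> 1" "1 - b \<le> q" "0 \<le> D"
    and step: "\<And>n. v (Suc n) \<le> (1 - b) * v n + b * (L + q ^ Suc n * D)"
  shows "v n \<le> L + (\<bar>v 0 - L\<bar> + of_nat n * D) * q ^ n"
proof (induction n)
  case 0
  show ?case by simp
next
  case (Suc n)
  define E where "E = (\<bar>v 0 - L\<bar> + of_nat n * D) * q ^ n"
  have "0 \<le> q" using assms(2,3) by linarith
  then have "0 \<le> E" "0 \<le> q ^ Suc n * D"
    using \<open>0 \<le> D\<close> by (simp_all add: E_def)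
  have "v (Suc n) \<le> (1 - b) * (L + E) + b * (L + q ^ Suc n * D)"
    using step[of n] Suc assms(2) unfolding E_def
    by (meson add_right_mono diff_ge_0_iff_ge mult_left_mono order_trans)
  also have "\<dots> = L + (1 - b) * E + b * (q ^ Suc n * D)"
    by (simp add: algebra_simps)
  also have "\<dots> \<le> L + q * E + q ^ Suc n * D"
    using \<open>0 \<le> E\<close> \<open>0 \<le> q ^ Suc n * D\<close> assms(1-3)
    by (intro add_mono mult_right_mono mult_left_le_one_le order_refl) auto
  also have "\<dots> = L + (\<bar>v 0 - L\<bar> + of_nat (Suc n) * D) * q ^ Suc n"
    by (simp add: E_def algebra_simps)
  finally show ?case .
qed

lemma tendsto_linear_times_power_zero:
  fixes q :: real
  assumes "\<bar>q\<bar> < 1"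
  shows "(\<lambda>n. L + (A + D * real n) * q ^ n) \<longlonglongrightarrow> L"
proof -
  have "(\<lambda>n. L + (A * q ^ n + D * (real n * q ^ n))) \<longlonglongrightarrow> L + (A * 0 + D * 0)"
    using assms by (intro tendsto_intros LIMSEQ_power_zero powser_times_n_limit_0) auto
  then show ?thesis by (simp add: algebra_simps)
qed

lemma srtt_Suc: "0 < m \<Longrightarrow> srtt a S (Suc m) = (1 - a) * srtt a S m + a * S (Suc m)"
  by (cases m) auto

lemma rttvar_Suc: "0 < m \<Longrightarrow> rttvar a b S (Suc m) =
    (1 - b) * rttvar a b S m + b * \<bar>srtt a S m - S (Suc m)\<bar>"
  by (cases m) auto

lemma srtt_deviation_bound:
  assumes "0 \<le> a" "a \<le> 1" "0 < k"
    and samples: "\<forall>j>k. \<bar>S j - c\<bar> \<le> r"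
  shows "\<bar>srtt a S (k + n) - c\<bar> \<le> r + (1 - a) ^ n * \<bar>srtt a S k - c\<bar>"
  using smoothing_deviation_bound[of a "\<lambda>n. srtt a S (k + n)" "\<lambda>n. S (Suc (k + n))" c r]
    assms srtt_Suc[of "k + _" a S]
  by simp

lemma rttvar_bound:
  assumes "0 \<le> a" "a \<le> 1" "0 \<le> b" "b \<le> 1" "1 - a \<le> q" "1 - b \<le> q" "0 < k"
    and samples: "\<forall>j>k. \<bar>S j - c\<bar> \<le> r"
  shows "rttvar a b S (Suc k + n)
    \<le> 2 * r + (\<bar>rttvar a b S (Suc k) - 2 * r\<bar> + of_nat n * \<bar>srtt a S k - c\<bar>) * q ^ n"
proof -
  let ?D = "\<bar>srtt a S k - c\<bar>"
  have input: "\<bar>srtt a S (Suc k + n) - S (Suc (Suc k + n))\<bar> \<le> 2 * r + q ^ Suc n * ?D" for n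
  proof -
    have "\<bar>srtt a S (Suc k + n) - c\<bar> \<le> r + (1 - a) ^ Suc n * ?D"
      using srtt_deviation_bound[OF assms(1,2,7) samples, of "Suc n"] by simp
    moreover have "\<bar>S (Suc (Suc k + n)) - c\<bar> \<le> r"
      using samples by simp
    ultimately have "\<bar>srtt a S (Suc k + n) - S (Suc (Suc k + n))\<bar> \<le> (r + (1 - a) ^ Suc n * ?D) + r"
      by linarith
    also have "\<dots> \<le> 2 * r + q ^ Suc n * ?D"
      using mult_right_mono[OF power_mono[OF assms(5)] abs_ge_zero, of "Suc n"] assms(2)
      by simp
    finally show ?thesis .
  qed
  have step: "rttvar a b S (Suc k + Suc n)
      \<le> (1 - b) * rttvar a b S (Suc k + n) + b * (2 * r + q ^ Suc n * ?D)" for n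
    using rttvar_Suc[of "Suc k + n" a b S] input[of n] assms(3) by (simp add: mult_left_mono)
  from smoothing_geometric_input_bound[where v = "\<lambda>n. rttvar a b S (Suc k + n)" and L = "2 * r",
      OF assms(3,4,6) abs_ge_zero step]
  show ?thesis by simp
qed

theorem theorem4:
  fixes \<alpha> \<beta> c r :: rat and S :: "nat \<Rightarrow> rat" and i :: nat
  assumes "0 < \<alpha>" "\<alpha> < 1" "0 < \<beta>" "\<beta> < 1"
    and "\<forall>j\<ge>1. 0 < S j"
    and "0 < c" "0 < r" "i \<ge> 2"
    and "\<forall>j\<ge>i. c - r \<le> S j \<and> S j \<le> c + r"
  shows "\<exists>U :: nat \<Rightarrow> real.
           (\<forall>n. real_of_rat (rttvar \<alpha> \<beta> S (i + n)) \<le> U n)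
         \<and> U \<longlonglongrightarrow> 2 * real_of_rat r"
proof -
  define q where "q = max (1 - \<alpha>) (1 - \<beta>)"
  define A where "A = \<bar>rttvar \<alpha> \<beta> S i - 2 * r\<bar>"
  define D where "D = \<bar>srtt \<alpha> S (i - 1) - c\<bar>"
  define U where "U n = 2 * of_rat r + (of_rat A + of_rat D * real n) * of_rat q ^ n" for n
  have samples: "\<forall>j>i - 1. \<bar>S j - c\<bar> \<le> r"
  proof (intro allI impI)
    fix j assume "i - 1 < j"
    then have "i \<le> j" using assms(8) by linarith
    then have "c - r \<le> S j \<and> S j \<le> c + r" using assms(9) by blast
    then show "\<bar>S j - c\<bar> \<le> r" by (simp add: abs_le_iff)
  qed
  have bound: "rttvar \<alpha> \<beta> S (i + n) \<le> 2 * r + (A + of_nat n * D) * q ^ n" for n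
    using rttvar_bound[of \<alpha> \<beta> q "i - 1" S c r n] samples assms(1-4,8)
    by (simp add: q_def A_def D_def)
  have "real_of_rat (rttvar \<alpha> \<beta> S (i + n)) \<le> U n" for n
  proof -
    have "real_of_rat (rttvar \<alpha> \<beta> S (i + n)) \<le> of_rat (2 * r + (A + of_nat n * D) * q ^ n)"
      using bound[of n] by (simp only: of_rat_less_eq)
    also have "\<dots> = U n"
      by (simp add: U_def of_rat_add of_rat_mult of_rat_power algebra_simps)
    finally show ?thesis .
  qed
  moreover have "\<bar>real_of_rat q\<bar> < 1"
    using assms(1-4) by (simp add: q_def of_rat_less_1_iff)
  then have "U \<longlonglongrightarrow> 2 * real_of_rat r"
    unfolding U_def by (rule tendsto_linear_times_power_zero)
  ultimately show ?thesis by blast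
qed

end
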